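(* Let $u,v:\mathbb{R}/2\pi\mathbb{Z}\times[0,1]\to\mathbb{R}^3$ and $w:\mathbb{R}/2\pi\mathbb{Z}\times[0,1]\to\mathbb{R}$ be smooth functions, $2\pi$-periodic in $t$, and let $a,\beta,\alpha:[0,1]\to\mathbb{R}$. Suppose that for all $(t,\Omega)$ \[ \begin{aligned} \partial_tv&=-\beta e_1+\Omega^2\bar Iu+2\Omega\bar Jv-w^3(u-Su)-Rw^3\,(u-S^2u),\\ \partial_tu&=v,\\ \partial_tw&=-\alpha-w^3\big\langle u-Su,\,L_a(v-Sv)\big\rangle, \end{aligned} \] and that for all $\Omega\in[0,1]$ \[ u_3(0,\Omega)=1,\qquad \frac1{2\pi}\int_0^{2\pi}u_1(t,\Omega)\,dt=0,\qquad \Big[w^2\big\langle u-Su,\,L_a(u-Su)\big\rangle\Big](0,\Omega)=1. \] Then $\alpha(\Omega)=0$ for all $\Omega\in[0,1]$.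
   Context: $e_1=(1,0,0)$, $\bar I=\mathrm{diag}(1,1,0)$, $\bar J=\begin{pmatrix}0&-1&0\\1&0&0\\0&0&0\end{pmatrix}$, $L_a=\mathrm{diag}(1,1,a)$ (with $a=a(\Omega)$). $[S^j\phi](t,\Omega)=\phi(t+4\pi j/3,\Omega)$ and $[R\phi](t,\Omega)=\phi(-t,\Omega)$; $Rw^3$ denotes the function $(t,\Omega)\mapsto w(-t,\Omega)^3$. Products of a scalar function with a vector function are componentwise, e.g. $w^3(u-Su)=(w^3(u_1-Su_1),w^3(u_2-Su_2),w^3(u_3-Su_3))$; $\langle\cdot,\cdot\rangle$ is the Euclidean inner product in $\mathbb{R}^3$. *)

theory Defs
  imports "HOL-Analysis.Analysis"
begin

text \<open>P i j is the partial derivative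
  of order i in t and order j in Omega.\<close>
definition smooth_strip :: "(real \<Rightarrow> real \<Rightarrow> 'a::real_normed_vector) \<Rightarrow> bool" where
  "smooth_strip f \<longleftrightarrow>
     (\<exists>P :: nat \<Rightarrow> nat \<Rightarrow> real \<Rightarrow> real \<Rightarrow> 'a.
        P 0 0 = f \<and>
        (\<forall>i j. continuous_on (UNIV \<times> {0..1}) (\<lambda>(t, \<Omega>). P i j t \<Omega>) \<and>
               (\<forall>t. \<forall>\<Omega>\<in>{0..1}.
                  ((\<lambda>s. P i j s \<Omega>) has_vector_derivative P (Suc i) j t \<Omega>) (at t) \<and>
                  ((\<lambda>s. P i j t s) has_vector_derivative P i (Suc j) t \<Omega>) (at \<Omega> within {0..1}))))"

definition periodic_t :: "(real \<Rightarrow> real \<Rightarrow> 'a) \<Rightarrow> bool" where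
  "periodic_t f \<longleftrightarrow> (\<forall>t. \<forall>\<Omega>\<in>{0..1}. f (t + 2 * pi) \<Omega> = f t \<Omega>)"

definition e1 :: "real ^ 3" where
  "e1 = vector [1, 0, 0]"

definition Ibar :: "real ^ 3 ^ 3" where
  "Ibar = vector [vector [1, 0, 0], vector [0, 1, 0], vector [0, 0, 0]]"

definition Jbar :: "real ^ 3 ^ 3" where
  "Jbar = vector [vector [0, -1, 0], vector [1, 0, 0], vector [0, 0, 0]]"

definition La :: "real \<Rightarrow> real ^ 3 ^ 3" where
  "La a = vector [vector [1, 0, 0], vector [0, 1, 0], vector [0, 0, a]]"

definition Sh :: "nat \<Rightarrow> (real \<Rightarrow> real \<Rightarrow> 'a) \<Rightarrow> real \<Rightarrow> real \<Rightarrow> 'a" where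
  "Sh j \<phi> t \<Omega> = \<phi> (t + 4 * pi * real j / 3) \<Omega>"

definition Rf :: "(real \<Rightarrow> real \<Rightarrow> 'a) \<Rightarrow> real \<Rightarrow> real \<Rightarrow> 'a" where
  "Rf \<phi> t \<Omega> = \<phi> (-t) \<Omega>"

end

theory Submission
  imports Defs
begin

text \<open>At a zero of \<open>w\<close> the \<open>w\<close>-equation reduces to \<open>\<partial>\<^sub>tw = -\<alpha>\<close>, so if \<open>\<alpha> \<noteq> 0\<close> every zero
  of \<open>w\<close> is crossed in the same direction, which a periodic function cannot do: \<open>w\<close> has
  no zeros. Then \<open>1/w\<^sup>2 - \<langle>u - Su, L\<^sub>a(u - Su)\<rangle>\<close> is periodic, while by \<open>\<partial>\<^sub>tu = v\<close> and the
  symmetry of \<open>L\<^sub>a\<close> its derivative is \<open>2\<alpha>/w\<^sup>3\<close>, which never vanishes.\<close>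

lemma no_downcrossing_if_upcrossing_zeros:
  fixes f f' :: "real \<Rightarrow> real"
  assumes der: "\<And>t. (f has_real_derivative f' t) (at t)"
    and slope: "\<And>t. f t = 0 \<Longrightarrow> f' t = k" and "k > 0"
    and "a < b" and "f a > 0"
  shows "\<not> f b < 0"
proof
  assume "f b < 0"
  have cont: "continuous_on {a..b} f"
    using der by (meson DERIV_isCont continuous_at_imp_continuous_on)
  define Z where "Z = {t \<in> {a..b}. f t = 0}"
  have "\<exists>x. a \<le> x \<and> x \<le> b \<and> f x = 0"
    by (rule IVT2') (use \<open>f a > 0\<close> \<open>f b < 0\<close> \<open>a < b\<close> cont in auto)
  then have "Z \<noteq> {}" unfolding Z_def by auto
  have bdd: "bdd_below Z" unfolding Z_def by (rule bdd_belowI[of _ a]) auto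
  have "closed Z" unfolding Z_def
    using continuous_closed_preimage_constant[OF cont, of 0]
    by (simp add: Collect_conj_eq Int_commute vimage_def)
  define t1 where "t1 = Inf Z"
  have "t1 \<in> Z" unfolding t1_def by (rule closed_contains_Inf) fact+
  then have t1: "a \<le> t1" "f t1 = 0" unfolding Z_def by auto
  with \<open>f a > 0\<close> have "a < t1" by (cases "a = t1") auto
  obtain d where "d > 0" and left_neg: "\<And>h. h > 0 \<Longrightarrow> h < d \<Longrightarrow> f (t1 - h) < 0"
    using DERIV_pos_inc_left[OF der[of t1]] slope[OF t1(2)] \<open>k > 0\<close> t1(2) by auto
  define h where "h = min (d/2) ((t1 - a)/2)"
  have h: "h > 0" "h < d" "a < t1 - h"
    using \<open>d > 0\<close> \<open>a < t1\<close> unfolding h_def by (auto simp: min_def field_simps)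
  have "continuous_on {a..t1 - h} f"
    by (rule continuous_on_subset[OF cont]) (use \<open>t1 \<in> Z\<close> h in \<open>auto simp: Z_def\<close>)
  then obtain x where x: "a \<le> x" "x \<le> t1 - h" "f x = 0"
    using IVT2'[of f "t1 - h" 0 a] \<open>f a > 0\<close> left_neg[OF h(1,2)] h(3) by auto
  then have "x \<in> Z" using \<open>t1 \<in> Z\<close> h unfolding Z_def by auto
  then have "t1 \<le> x" unfolding t1_def by (rule cInf_lower[OF _ bdd])
  with x h show False by simp
qed

lemma no_periodic_zero_if_constant_slope_at_zeros:
  fixes f f' :: "real \<Rightarrow> real"
  assumes der: "\<And>t. (f has_real_derivative f' t) (at t)"
    and slope: "\<And>t. f t = 0 \<Longrightarrow> f' t = k" and "k > 0"
    and "T > 0" and "f t0 = 0"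
  shows "f (t0 + T) \<noteq> 0"
proof
  assume "f (t0 + T) = 0"
  obtain d1 where "d1 > 0" and right_pos: "\<And>h. h > 0 \<Longrightarrow> h < d1 \<Longrightarrow> f (t0 + h) > 0"
    using DERIV_pos_inc_right[OF der[of t0]] slope[OF \<open>f t0 = 0\<close>] \<open>k > 0\<close> \<open>f t0 = 0\<close> by auto
  obtain d2 where "d2 > 0" and left_neg: "\<And>h. h > 0 \<Longrightarrow> h < d2 \<Longrightarrow> f (t0 + T - h) < 0"
    using DERIV_pos_inc_left[OF der[of "t0 + T"]] slope[OF \<open>f (t0 + T) = 0\<close>] \<open>k > 0\<close>
      \<open>f (t0 + T) = 0\<close> by auto
  define h where "h = min (T/3) (min (d1/2) (d2/2))"
  have h: "h > 0" "h < d1" "h < d2" "t0 + h < t0 + T - h"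
    using \<open>d1 > 0\<close> \<open>d2 > 0\<close> \<open>T > 0\<close> by (auto simp: h_def)
  show False
    using no_downcrossing_if_upcrossing_zeros[OF der slope \<open>k > 0\<close> h(4)]
      right_pos[OF h(1,2)] left_neg[OF h(1,3)] by blast
qed

lemma no_periodic_zero_if_nonzero_constant_slope_at_zeros:
  fixes f f' :: "real \<Rightarrow> real"
  assumes der: "\<And>t. (f has_real_derivative f' t) (at t)"
    and slope: "\<And>t. f t = 0 \<Longrightarrow> f' t = k" and "k \<noteq> 0"
    and "T > 0" and "f t0 = 0"
  shows "f (t0 + T) \<noteq> 0"
proof (cases "k > 0")
  case True
  then show ?thesis
    using no_periodic_zero_if_constant_slope_at_zeros[OF der slope] \<open>T > 0\<close> \<open>f t0 = 0\<close> by blast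
next
  case False
  have "(- f) (t0 + T) \<noteq> 0"
    by (rule no_periodic_zero_if_constant_slope_at_zeros[of _ "\<lambda>t. - f' t" "- k"])
      (use der slope False \<open>k \<noteq> 0\<close> \<open>T > 0\<close> \<open>f t0 = 0\<close> in \<open>auto intro: derivative_eq_intros\<close>)
  then show ?thesis by simp
qed

lemma periodic_forcing_vanishes:
  fixes w q c :: "real \<Rightarrow> real"
  assumes "T > 0"
    and w_periodic: "\<And>t. w (t + T) = w t" and q_periodic: "q T = q 0"
    and w_deriv: "\<And>t. (w has_real_derivative - \<alpha> - w t ^ 3 * c t) (at t)"
    and q_deriv: "\<And>t. (q has_real_derivative 2 * c t) (at t)"
  shows "\<alpha> = 0"
proof (rule ccontr)
  assume "\<alpha> \<noteq> 0"
  have w_nonzero: "w t \<noteq> 0" for t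
  proof
    assume "w t = 0"
    have "w (t + T) \<noteq> 0"
      by (rule no_periodic_zero_if_nonzero_constant_slope_at_zeros[OF w_deriv, of "- \<alpha>"])
        (use \<open>\<alpha> \<noteq> 0\<close> \<open>T > 0\<close> \<open>w t = 0\<close> in auto)
    with \<open>w t = 0\<close> w_periodic show False by simp
  qed
  define g where "g t = 1 / w t ^ 2 - q t" for t
  have g_deriv: "(g has_real_derivative 2 * \<alpha> / w t ^ 3) (at t)" for t
    unfolding g_def
    by (rule derivative_eq_intros w_deriv q_deriv refl | simp add: w_nonzero)+
      (simp add: w_nonzero field_simps power_numeral_reduce)
  have "g T = g 0"
    using w_periodic[of 0] q_periodic by (simp add: g_def)
  moreover obtain z where "g T - g 0 = (T - 0) * (2 * \<alpha> / w z ^ 3)"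
    using MVT2[of 0 T g "\<lambda>t. 2 * \<alpha> / w t ^ 3"] g_deriv \<open>T > 0\<close> by auto
  ultimately show False
    using \<open>T > 0\<close> \<open>\<alpha> \<noteq> 0\<close> w_nonzero[of z] by simp
qed

lemma inner_symmetric_matrix_commute:
  fixes M :: "real ^ 'n ^ 'n"
  assumes "transpose M = M"
  shows "y \<bullet> (M *v x) = x \<bullet> (M *v y)"
  by (metis assms dot_lmul_matrix inner_commute transpose_matrix_vector)

lemma has_real_derivative_quadratic_form:
  fixes M :: "real ^ 'n ^ 'n"
  assumes "transpose M = M" and "(f has_vector_derivative f') (at t)"
  shows "((\<lambda>s. f s \<bullet> (M *v f s)) has_real_derivative 2 * (f t \<bullet> (M *v f'))) (at t)"
proof -
  have "((\<lambda>s. M *v f s) has_vector_derivative M *v f') (at t)"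
    by (rule bounded_linear.has_vector_derivative[OF matrix_vector_mul_bounded_linear assms(2)])
  from has_derivative_inner[OF assms(2)[unfolded has_vector_derivative_def]
      this[unfolded has_vector_derivative_def]]
  show ?thesis
    unfolding has_real_derivative_iff_has_vector_derivative has_vector_derivative_def
    by (simp add: inner_symmetric_matrix_commute[OF assms(1)] algebra_simps)
qed

lemma transpose_La: "transpose (La c) = La c"
  by (simp add: La_def transpose_def vec_eq_iff forall_3)

lemma Sh_has_vector_derivative:
  assumes "\<And>t. ((\<lambda>s. \<phi> s \<Omega>) has_vector_derivative \<phi>' t \<Omega>) (at t)"
  shows "((\<lambda>s. Sh j \<phi> s \<Omega>) has_vector_derivative Sh j \<phi>' t \<Omega>) (at t)"
proof -
  have "((\<lambda>s. s + 4 * pi * real j / 3) has_vector_derivative 1) (at t)"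
    by (auto intro!: derivative_eq_intros)
  from vector_diff_chain_at[OF this assms]
  show ?thesis by (simp add: Sh_def o_def)
qed

lemma periodic_t_Sh:
  assumes "periodic_t \<phi>" and "\<Omega> \<in> {0..1}"
  shows "Sh j \<phi> (t + 2 * pi) \<Omega> = Sh j \<phi> t \<Omega>"
  using assms unfolding periodic_t_def Sh_def by (metis add.commute add.left_commute)

theorem lemma2p4:
  fixes u v :: "real \<Rightarrow> real \<Rightarrow> real ^ 3"
    and w :: "real \<Rightarrow> real \<Rightarrow> real"
    and a \<beta> \<alpha> :: "real \<Rightarrow> real"
  assumes smooth_u: "smooth_strip u" and smooth_v: "smooth_strip v" and smooth_w: "smooth_strip w"
    and per_u: "periodic_t u" and per_v: "periodic_t v" and per_w: "periodic_t w"
    and eq_v: "\<And>t \<Omega>. \<Omega> \<in> {0..1} \<Longrightarrow>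
      ((\<lambda>s. v s \<Omega>) has_vector_derivative
         (- \<beta> \<Omega>) *\<^sub>R e1 + \<Omega>\<^sup>2 *\<^sub>R (Ibar *v u t \<Omega>) + (2 * \<Omega>) *\<^sub>R (Jbar *v v t \<Omega>)
         - (w t \<Omega> ^ 3) *\<^sub>R (u t \<Omega> - Sh 1 u t \<Omega>)
         - (Rf w t \<Omega> ^ 3) *\<^sub>R (u t \<Omega> - Sh 2 u t \<Omega>)) (at t)"
    and eq_u: "\<And>t \<Omega>. \<Omega> \<in> {0..1} \<Longrightarrow>
      ((\<lambda>s. u s \<Omega>) has_vector_derivative v t \<Omega>) (at t)"
    and eq_w: "\<And>t \<Omega>. \<Omega> \<in> {0..1} \<Longrightarrow>
      ((\<lambda>s. w s \<Omega>) has_real_derivative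
         - \<alpha> \<Omega> - w t \<Omega> ^ 3 * ((u t \<Omega> - Sh 1 u t \<Omega>) \<bullet> (La (a \<Omega>) *v (v t \<Omega> - Sh 1 v t \<Omega>)))) (at t)"
    and norm_u3: "\<And>\<Omega>. \<Omega> \<in> {0..1} \<Longrightarrow> u 0 \<Omega> $ 3 = 1"
    and mean_u1: "\<And>\<Omega>. \<Omega> \<in> {0..1} \<Longrightarrow> (1 / (2 * pi)) * integral {0..2 * pi} (\<lambda>t. u t \<Omega> $ 1) = 0"
    and norm_w: "\<And>\<Omega>. \<Omega> \<in> {0..1} \<Longrightarrow>
      w 0 \<Omega> ^ 2 * ((u 0 \<Omega> - Sh 1 u 0 \<Omega>) \<bullet> (La (a \<Omega>) *v (u 0 \<Omega> - Sh 1 u 0 \<Omega>))) = 1"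
  shows "\<forall>\<Omega>\<in>{0..1}. \<alpha> \<Omega> = 0"
proof
  fix \<Omega> :: real
  assume \<Omega>: "\<Omega> \<in> {0..1}"
  define d where "d t = u t \<Omega> - Sh 1 u t \<Omega>" for t
  define q where "q t = d t \<bullet> (La (a \<Omega>) *v d t)" for t
  have "(d has_vector_derivative v t \<Omega> - Sh 1 v t \<Omega>) (at t)" for t
    unfolding d_def
    by (intro has_vector_derivative_diff eq_u[OF \<Omega>] Sh_has_vector_derivative)
  then have q_deriv: "(q has_real_derivative
      2 * (d t \<bullet> (La (a \<Omega>) *v (v t \<Omega> - Sh 1 v t \<Omega>)))) (at t)" for t
    unfolding q_def by (rule has_real_derivative_quadratic_form[OF transpose_La])
  have w_periodic: "w (t + 2 * pi) \<Omega> = w t \<Omega>" for t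
    using per_w \<Omega> unfolding periodic_t_def by blast
  have "d (t + 2 * pi) = d t" for t
    using per_u \<Omega> periodic_t_Sh[OF per_u \<Omega>] unfolding d_def periodic_t_def by simp
  then have "q (2 * pi) = q 0"
    unfolding q_def by (metis add_0)
  from periodic_forcing_vanishes[OF _ w_periodic this eq_w[OF \<Omega>, folded d_def] q_deriv]
  show "\<alpha> \<Omega> = 0" by simp
qed

end
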